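(* The spectrum of the multiplication operator $\mathcal{M}_F$ on $\mathfrak{M}$ is the segment $$\sigma(\mathcal{M}_F)=\Big[-e^{i\pi/4}\tfrac{1}{\sqrt2},\,e^{i\pi/4}\tfrac{1}{\sqrt2}\Big]=\{(1-\tau)(-e^{i\pi/4}/\sqrt2)+\tau e^{i\pi/4}/\sqrt2:\tau\in[0,1]\}.$$
   Context: $\mathbb{R}^{+}=(0,\infty)$. The model space $\mathfrak{M}$ is the Hilbert space of columns $\begin{bmatrix}\varphi_+\\ \varphi_-\end{bmatrix}$ with $\varphi_\pm\in L^2(\mathbb{R}^{+})$, inner product $\langle\varphi_+,\psi_+\rangle_{L^2(\mathbb{R}^{+})}+\langle\varphi_-,\psi_-\rangle_{L^2(\mathbb{R}^{+})}$. For $\mu>0$, $F(\mu)=\begin{bmatrix}0&F_{+-}(\mu)\\ F_{-+}(\mu)&0\end{bmatrix}$ with $F_{+-}(\mu)=\frac{1}{\sqrt{2\pi}}e^{i\pi/4}e^{-\pi\mu/2}\Gamma(\tfrac12+i\mu)$, $F_{-+}(\mu)=\frac{1}{\sqrt{2\pi}}e^{i\pi/4}e^{\pi\mu/2}\Gamma(\tfrac12-i\mu)$ ($\Gamma$ Euler's Gamma function), and $\mathcal{M}_F$ is the bounded operator $(\mathcal{M}_Fy)(\mu)=F(\mu)y(\mu)$ on $\mathfrak{M}$. *)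

theory Defs
  imports "HOL-Analysis.Analysis"
begin

definition Mpos :: "real measure" where
  "Mpos = restrict_space lborel {0<..}"

text \<open>Representatives of elements of L2(R+) (complex valued).\<close>
definition L2pos :: "(real \<Rightarrow> complex) set" where
  "L2pos = {f. f \<in> borel_measurable Mpos \<and> integrable Mpos (\<lambda>x. (cmod (f x))\<^sup>2)}"

text \<open>The model space: columns (phi_plus, phi_minus) of L2(R+) functions.\<close>
type_synonym mvec = "(real \<Rightarrow> complex) \<times> (real \<Rightarrow> complex)"

definition Mspace :: "mvec set" where
  "Mspace = {y. fst y \<in> L2pos \<and> snd y \<in> L2pos}"

definition mnorm :: "mvec \<Rightarrow> real" where
  "mnorm y = sqrt ((\<integral>x. (cmod (fst y x))\<^sup>2 \<partial>Mpos) + (\<integral>x. (cmod (snd y x))\<^sup>2 \<partial>Mpos))"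

definition meq :: "mvec \<Rightarrow> mvec \<Rightarrow> bool" where
  "meq y z \<longleftrightarrow> (AE x in Mpos. fst y x = fst z x \<and> snd y x = snd z x)"

definition madd :: "mvec \<Rightarrow> mvec \<Rightarrow> mvec" where
  "madd y z = ((\<lambda>x. fst y x + fst z x), (\<lambda>x. snd y x + snd z x))"

definition mscale :: "complex \<Rightarrow> mvec \<Rightarrow> mvec" where
  "mscale a y = ((\<lambda>x. a * fst y x), (\<lambda>x. a * snd y x))"

definition Fpm :: "real \<Rightarrow> complex" where
  "Fpm \<mu> = complex_of_real (1 / sqrt (2 * pi)) * cis (pi / 4) * complex_of_real (exp (- pi * \<mu> / 2))
           * Gamma (1/2 + \<i> * complex_of_real \<mu>)"

definition Fmp :: "real \<Rightarrow> complex" where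
  "Fmp \<mu> = complex_of_real (1 / sqrt (2 * pi)) * cis (pi / 4) * complex_of_real (exp (pi * \<mu> / 2))
           * Gamma (1/2 - \<i> * complex_of_real \<mu>)"

text \<open>The multiplication operator M_F, with F = [[0, F+-],[F-+, 0]].\<close>
definition MF :: "mvec \<Rightarrow> mvec" where
  "MF y = ((\<lambda>\<mu>. Fpm \<mu> * snd y \<mu>), (\<lambda>\<mu>. Fmp \<mu> * fst y \<mu>))"

definition MF_resolvent :: "complex \<Rightarrow> bool" where
  "MF_resolvent lam \<longleftrightarrow>
     (\<exists>S :: mvec \<Rightarrow> mvec.
        (\<forall>z\<in>Mspace. S z \<in> Mspace) \<and>
        (\<forall>z1\<in>Mspace. \<forall>z2\<in>Mspace. meq z1 z2 \<longrightarrow> meq (S z1) (S z2)) \<and>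
        (\<forall>a. \<forall>z1\<in>Mspace. \<forall>z2\<in>Mspace.
            meq (S (madd (mscale a z1) z2)) (madd (mscale a (S z1)) (S z2))) \<and>
        (\<exists>C. \<forall>z\<in>Mspace. mnorm (S z) \<le> C * mnorm z) \<and>
        (\<forall>y\<in>Mspace. meq (S (madd (MF y) (mscale (- lam) y))) y) \<and>
        (\<forall>z\<in>Mspace. meq (madd (MF (S z)) (mscale (- lam) (S z))) z))"

definition MF_spectrum :: "complex set" where
  "MF_spectrum = {lam. \<not> MF_resolvent lam}"

end

theory Submission
  imports Defs
begin

(* By the reflection formula for Gamma, F+-(\<mu>) F-+(\<mu>) = i / (2 cosh (pi \<mu>)), so the
   antidiagonal matrix F(\<mu>) has the eigenvalues +- e^(i pi/4) / sqrt (2 cosh (pi \<mu>)), which for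
   \<mu> > 0 fill the segment apart from its midpoint.
   If lam lies off the segment, lam^2 keeps a positive distance from the segment [0, i/2], which
   contains every F+-(\<mu>) F-+(\<mu>); hence det (F(\<mu>) - lam) = lam^2 - F+-(\<mu>) F-+(\<mu>) is bounded
   away from 0 and the pointwise inverse matrix is a bounded multiplication operator.
   If lam lies on the segment, an eigenvector of F(\<mu>) cut off to a short interval on which an
   eigenvalue stays close to lam is an approximate eigenvector, so M_F - lam has no bounded
   inverse. *)

lemma cis_quarter_pi_sq: "(cis (pi / 4))\<^sup>2 = \<i>"
proof -
  have "(cis (pi / 4))\<^sup>2 = cis (pi / 2)"
    by (simp add: power2_eq_square cis_mult)
  then show ?thesis by (simp add: complex_eq_iff)
qed

lemma sin_pi_critical_line: "sin (of_real pi * (1/2 + \<i> * of_real \<mu>)) = of_real (cosh (pi * \<mu>))"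
proof -
  have "of_real pi * (1/2 + \<i> * of_real \<mu>) = of_real (pi / 2) + \<i> * of_real (pi * \<mu>)"
    by (simp add: algebra_simps)
  then have "sin (of_real pi * (1/2 + \<i> * of_real \<mu>)) = cos (\<i> * of_real (pi * \<mu>))"
    by (simp add: sin_add cos_of_real sin_of_real)
  also have "\<dots> = of_real ((exp (pi * \<mu>) + inverse (exp (pi * \<mu>))) / 2)"
    by (rule cosh_real[symmetric])
  also have "\<dots> = of_real (cosh (pi * \<mu>))"
    by (simp add: cosh_def exp_minus)
  finally show ?thesis .
qed

lemma Gamma_critical_line_cnj: "Gamma (1/2 - \<i> * of_real \<mu>) = cnj (Gamma (1/2 + \<i> * of_real \<mu>))"
  by (simp add: cnj_Gamma)

lemma Gamma_critical_line_mult_conj: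
  "Gamma (1/2 + \<i> * of_real \<mu>) * Gamma (1/2 - \<i> * of_real \<mu>) = of_real (pi / cosh (pi * \<mu>))"
  using Gamma_reflection_complex[of "1/2 + \<i> * of_real \<mu>"] sin_pi_critical_line[of \<mu>]
  by (simp add: diff_add_eq_diff_diff_swap)

lemma norm_Gamma_critical_line_sq:
  "(cmod (Gamma (1/2 + \<i> * of_real \<mu>)))\<^sup>2 = pi / cosh (pi * \<mu>)"
proof -
  have "of_real ((cmod (Gamma (1/2 + \<i> * of_real \<mu>)))\<^sup>2) = (of_real (pi / cosh (pi * \<mu>)) :: complex)"
    using Gamma_critical_line_mult_conj[of \<mu>] complex_norm_square
    by (simp add: Gamma_critical_line_cnj)
  then show ?thesis by (simp only: of_real_eq_iff)
qed

lemma Fpm_mult_Fmp: "Fpm \<mu> * Fmp \<mu> = \<i> / of_real (2 * cosh (pi * \<mu>))"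
proof -
  have "Fpm \<mu> * Fmp \<mu> = (complex_of_real (1 / sqrt (2 * pi)))\<^sup>2 * (cis (pi / 4))\<^sup>2
      * of_real (exp (- pi * \<mu> / 2) * exp (pi * \<mu> / 2))
      * (Gamma (1/2 + \<i> * of_real \<mu>) * Gamma (1/2 - \<i> * of_real \<mu>))"
    unfolding Fpm_def Fmp_def by (simp add: power2_eq_square)
  also have "\<dots> = of_real (1 / (2 * pi)) * \<i> * of_real (pi / cosh (pi * \<mu>))"
    by (simp only: cis_quarter_pi_sq Gamma_critical_line_mult_conj exp_add[symmetric]
        flip: of_real_power) (simp add: power_divide)
  finally show ?thesis by (simp add: field_simps)
qed

lemma exp_div_two_cosh_le_1: "exp x / (2 * cosh x) \<le> (1::real)"
  by (simp add: cosh_def exp_minus field_simps add_pos_pos)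

lemma norm_Fpm_le_1: "cmod (Fpm \<mu>) \<le> 1"
proof -
  have "(cmod (Fpm \<mu>))\<^sup>2 = (1 / sqrt (2 * pi))\<^sup>2 * (exp (- pi * \<mu> / 2))\<^sup>2
      * (cmod (Gamma (1/2 + \<i> * of_real \<mu>)))\<^sup>2"
    unfolding Fpm_def by (simp add: norm_mult norm_divide power_mult_distrib power_divide)
  also have "\<dots> = exp (- pi * \<mu>) / (2 * cosh (- pi * \<mu>))"
    by (simp only: norm_Gamma_critical_line_sq flip: exp_of_nat_mult)
      (simp add: power_divide field_simps)
  also have "\<dots> \<le> 1" by (rule exp_div_two_cosh_le_1)
  finally show ?thesis by (simp add: power_le_one_iff)
qed

lemma norm_Fmp_le_1: "cmod (Fmp \<mu>) \<le> 1"
proof -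
  have "(cmod (Fmp \<mu>))\<^sup>2 = (1 / sqrt (2 * pi))\<^sup>2 * (exp (pi * \<mu> / 2))\<^sup>2
      * (cmod (Gamma (1/2 - \<i> * of_real \<mu>)))\<^sup>2"
    unfolding Fmp_def by (simp add: norm_mult norm_divide power_mult_distrib power_divide)
  also have "\<dots> = exp (pi * \<mu>) / (2 * cosh (pi * \<mu>))"
    by (simp only: Gamma_critical_line_cnj complex_mod_cnj norm_Gamma_critical_line_sq
        flip: exp_of_nat_mult) (simp add: power_divide field_simps)
  also have "\<dots> \<le> 1" by (rule exp_div_two_cosh_le_1)
  finally show ?thesis by (simp add: power_le_one_iff)
qed

lemma critical_line_notin_nonpos_Ints: "Re z = 1/2 \<Longrightarrow> z \<notin> \<int>\<^sub>\<le>\<^sub>0"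
  by (auto elim!: nonpos_Ints_cases)

lemma continuous_on_Fpm: "continuous_on UNIV Fpm"
  unfolding Fpm_def
  by (intro continuous_at_imp_continuous_on ballI continuous_intros critical_line_notin_nonpos_Ints) auto

lemma continuous_on_Fmp: "continuous_on UNIV Fmp"
  unfolding Fmp_def
  by (intro continuous_at_imp_continuous_on ballI continuous_intros critical_line_notin_nonpos_Ints) auto

lemma borel_measurable_Mpos_continuous:
  "continuous_on UNIV (f :: real \<Rightarrow> 'a::topological_space) \<Longrightarrow> f \<in> borel_measurable Mpos"
  unfolding Mpos_def by (intro measurable_restrict_space1) (simp add: borel_measurable_continuous_onI)

lemma borel_measurable_Mpos_id [measurable]: "(\<lambda>x::real. x) \<in> borel_measurable Mpos"
  by (rule borel_measurable_Mpos_continuous) (rule continuous_on_id)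

lemma borel_measurable_Fpm [measurable]: "Fpm \<in> borel_measurable Mpos"
  by (rule borel_measurable_Mpos_continuous[OF continuous_on_Fpm])

lemma borel_measurable_Fmp [measurable]: "Fmp \<in> borel_measurable Mpos"
  by (rule borel_measurable_Mpos_continuous[OF continuous_on_Fmp])

lemma L2pos_bound:
  fixes f :: "real \<Rightarrow> complex"
  assumes "integrable Mpos h" "f \<in> borel_measurable Mpos" "\<And>x. (cmod (f x))\<^sup>2 \<le> h x"
  shows "f \<in> L2pos" "(\<integral>x. (cmod (f x))\<^sup>2 \<partial>Mpos) \<le> (\<integral>x. h x \<partial>Mpos)"
proof -
  have "integrable Mpos (\<lambda>x. (cmod (f x))\<^sup>2)"
    using assms by (intro Bochner_Integration.integrable_bound[OF assms(1)])
      (auto intro!: AE_I2 order_trans[OF _ abs_ge_self])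
  then show "f \<in> L2pos" "(\<integral>x. (cmod (f x))\<^sup>2 \<partial>Mpos) \<le> (\<integral>x. h x \<partial>Mpos)"
    using assms by (auto simp: L2pos_def intro!: integral_mono)
qed

lemma mnorm_meq:
  assumes "meq y z" "y \<in> Mspace" "z \<in> Mspace"
  shows "mnorm y = mnorm z"
proof -
  have "AE x in Mpos. fst y x = fst z x" "AE x in Mpos. snd y x = snd z x"
    using assms(1) unfolding meq_def by (auto elim: eventually_mono)
  then have "(\<integral>x. (cmod (fst y x))\<^sup>2 \<partial>Mpos) = (\<integral>x. (cmod (fst z x))\<^sup>2 \<partial>Mpos)"
    "(\<integral>x. (cmod (snd y x))\<^sup>2 \<partial>Mpos) = (\<integral>x. (cmod (snd z x))\<^sup>2 \<partial>Mpos)"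
    using assms(2,3) by (auto intro!: integral_cong_AE simp: Mspace_def L2pos_def elim: eventually_mono)
  then show ?thesis by (simp add: mnorm_def)
qed

definition mmult ::
    "(real \<Rightarrow> complex) \<Rightarrow> (real \<Rightarrow> complex) \<Rightarrow> (real \<Rightarrow> complex) \<Rightarrow> (real \<Rightarrow> complex) \<Rightarrow> mvec \<Rightarrow> mvec"
  where "mmult a b c d y =
    ((\<lambda>\<mu>. a \<mu> * fst y \<mu> + b \<mu> * snd y \<mu>), (\<lambda>\<mu>. c \<mu> * fst y \<mu> + d \<mu> * snd y \<mu>))"

lemma norm_mult_add_sq_le:
  fixes a b u v :: complex
  assumes "cmod a \<le> K" "cmod b \<le> K"
  shows "(cmod (a * u + b * v))\<^sup>2 \<le> 2 * K\<^sup>2 * ((cmod u)\<^sup>2 + (cmod v)\<^sup>2)"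
proof -
  have "cmod (a * u + b * v) \<le> K * (cmod u + cmod v)"
    using norm_triangle_ineq[of "a * u" "b * v"] assms
      mult_right_mono[OF assms(1) norm_ge_zero[of u]] mult_right_mono[OF assms(2) norm_ge_zero[of v]]
    by (simp add: norm_mult distrib_left)
  then have "(cmod (a * u + b * v))\<^sup>2 \<le> K\<^sup>2 * (cmod u + cmod v)\<^sup>2"
    by (metis power_mono norm_ge_zero power_mult_distrib)
  also have "\<dots> \<le> K\<^sup>2 * (2 * ((cmod u)\<^sup>2 + (cmod v)\<^sup>2))"
    using sum_squares_ge_zero[of "cmod u - cmod v" 0]
    by (intro mult_left_mono) (auto simp: power2_eq_square algebra_simps)
  finally show ?thesis by (simp add: algebra_simps)
qed

lemma mmult_bounded:
  assumes [measurable]: "a \<in> borel_measurable Mpos" "b \<in> borel_measurable Mpos"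
    "c \<in> borel_measurable Mpos" "d \<in> borel_measurable Mpos"
  assumes "\<And>\<mu>. cmod (a \<mu>) \<le> K" "\<And>\<mu>. cmod (b \<mu>) \<le> K"
    "\<And>\<mu>. cmod (c \<mu>) \<le> K" "\<And>\<mu>. cmod (d \<mu>) \<le> K"
  assumes y: "y \<in> Mspace"
  shows "mmult a b c d y \<in> Mspace" "mnorm (mmult a b c d y) \<le> 2 * K * mnorm y"
proof -
  have [measurable]: "fst y \<in> borel_measurable Mpos" "snd y \<in> borel_measurable Mpos"
    and int: "integrable Mpos (\<lambda>x. (cmod (fst y x))\<^sup>2)" "integrable Mpos (\<lambda>x. (cmod (snd y x))\<^sup>2)"
    using y by (auto simp: Mspace_def L2pos_def)
  define A where "A = (\<integral>x. (cmod (fst y x))\<^sup>2 \<partial>Mpos)"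
  define B where "B = (\<integral>x. (cmod (snd y x))\<^sup>2 \<partial>Mpos)"
  let ?h = "\<lambda>x. 2 * K\<^sup>2 * ((cmod (fst y x))\<^sup>2 + (cmod (snd y x))\<^sup>2)"
  have h: "integrable Mpos ?h" "(\<integral>x. ?h x \<partial>Mpos) = 2 * K\<^sup>2 * (A + B)"
    and AB: "(\<integral>x. (cmod (fst y x))\<^sup>2 + (cmod (snd y x))\<^sup>2 \<partial>Mpos) = A + B"
    using int by (auto simp: A_def B_def)
  have "fst (mmult a b c d y) \<in> L2pos \<and> (\<integral>x. (cmod (fst (mmult a b c d y) x))\<^sup>2 \<partial>Mpos) \<le> 2 * K\<^sup>2 * (A + B)"
    "snd (mmult a b c d y) \<in> L2pos \<and> (\<integral>x. (cmod (snd (mmult a b c d y) x))\<^sup>2 \<partial>Mpos) \<le> 2 * K\<^sup>2 * (A + B)"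
    using L2pos_bound[OF h(1), of "fst (mmult a b c d y)"] L2pos_bound[OF h(1), of "snd (mmult a b c d y)"]
      norm_mult_add_sq_le[OF assms(5,6)] norm_mult_add_sq_le[OF assms(7,8)]
    by (auto simp: mmult_def AB)
  then have "mmult a b c d y \<in> Mspace \<and> mnorm (mmult a b c d y) \<le> sqrt ((2 * K)\<^sup>2 * (A + B))"
    by (auto simp: Mspace_def mnorm_def power_mult_distrib intro!: real_sqrt_le_mono)
  moreover have "0 \<le> K" using assms(5) norm_ge_zero order_trans by blast
  ultimately show "mmult a b c d y \<in> Mspace" "mnorm (mmult a b c d y) \<le> 2 * K * mnorm y"
    by (auto simp: mnorm_def A_def B_def real_sqrt_mult)
qed

lemma closed_segment_neg_iff:
  fixes w :: "'a::real_vector"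
  shows "x \<in> closed_segment (- w) w \<longleftrightarrow> (\<exists>r. \<bar>r\<bar> \<le> 1 \<and> x = r *\<^sub>R w)"
proof
  assume "x \<in> closed_segment (- w) w"
  then obtain u where "0 \<le> u" "u \<le> 1" "x = (1 - u) *\<^sub>R (- w) + u *\<^sub>R w"
    by (auto simp: closed_segment_def)
  then show "\<exists>r. \<bar>r\<bar> \<le> 1 \<and> x = r *\<^sub>R w"
    by (intro exI[of _ "2 * u - 1"]) (simp add: algebra_simps flip: scaleR_add_left)
next
  assume "\<exists>r. \<bar>r\<bar> \<le> 1 \<and> x = r *\<^sub>R w"
  then obtain r where r: "\<bar>r\<bar> \<le> 1" "x = r *\<^sub>R w" by blast
  have "(1 - (r + 1) / 2) *\<^sub>R (- w) + ((r + 1) / 2) *\<^sub>R w = ((r + 1) / 2 - (1 - (r + 1) / 2)) *\<^sub>R w"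
    by (simp only: scaleR_minus_right scaleR_diff_left) simp
  then have "x = (1 - (r + 1) / 2) *\<^sub>R (- w) + ((r + 1) / 2) *\<^sub>R w \<and> 0 \<le> (r + 1) / 2 \<and> (r + 1) / 2 \<le> 1"
    using r by auto
  then show "x \<in> closed_segment (- w) w"
    unfolding closed_segment_def by blast
qed

lemma in_closed_segment_if_square_in_closed_segment:
  fixes w z :: complex
  assumes "z\<^sup>2 \<in> closed_segment 0 (w\<^sup>2)"
  shows "z \<in> closed_segment (- w) w"
proof -
  obtain u where u: "0 \<le> u" "u \<le> 1" "z\<^sup>2 = u *\<^sub>R w\<^sup>2"
    using assms by (auto simp: closed_segment_def)
  then have "z\<^sup>2 = (of_real (sqrt u) * w)\<^sup>2"
    by (simp add: power_mult_distrib scaleR_conv_of_real flip: of_real_power)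
  then have "z = sqrt u *\<^sub>R w \<or> z = (- sqrt u) *\<^sub>R w"
    by (auto simp: power2_eq_iff scaleR_conv_of_real)
  moreover have "\<bar>sqrt u\<bar> \<le> 1" using u by simp
  ultimately show ?thesis
    unfolding closed_segment_neg_iff by (metis abs_minus_cancel)
qed

definition spectrum_end :: complex where
  "spectrum_end = cis (pi / 4) / complex_of_real (sqrt 2)"

lemma spectrum_end_sq: "spectrum_end\<^sup>2 = \<i> / 2"
  by (simp add: spectrum_end_def power_divide cis_quarter_pi_sq flip: of_real_power)

lemma Fpm_mult_Fmp_in_closed_segment: "Fpm \<mu> * Fmp \<mu> \<in> closed_segment 0 (spectrum_end\<^sup>2)"
proof -
  have "Fpm \<mu> * Fmp \<mu> = (1 / cosh (pi * \<mu>)) *\<^sub>R spectrum_end\<^sup>2"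
    by (simp add: Fpm_mult_Fmp spectrum_end_sq scaleR_conv_of_real)
  moreover have "0 \<le> 1 / cosh (pi * \<mu>)" "1 / cosh (pi * \<mu>) \<le> 1"
    using cosh_real_ge_1[of "pi * \<mu>"] by auto
  ultimately show ?thesis
    unfolding closed_segment_def by (intro CollectI exI[of _ "1 / cosh (pi * \<mu>)"]) auto
qed

lemma antidiagonal_inverse:
  fixes l p q u v :: complex
  assumes "D = l\<^sup>2 - p * q" "D \<noteq> 0"
  shows "- l / D * (p * v + - l * u) + - p / D * (q * u + - l * v) = u"
    "- q / D * (p * v + - l * u) + - l / D * (q * u + - l * v) = v"
    "p * (- q / D * u + - l / D * v) + - l * (- l / D * u + - p / D * v) = u"
    "q * (- l / D * u + - p / D * v) + - l * (- q / D * u + - l / D * v) = v"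
  using assms(2) by (simp_all add: field_simps) (simp_all add: assms(1) power2_eq_square algebra_simps)

lemma MF_resolvent_if_det_bounded_below:
  assumes "0 < \<delta>" and det: "\<And>\<mu>. \<delta> \<le> cmod (lam\<^sup>2 - Fpm \<mu> * Fmp \<mu>)"
  shows "MF_resolvent lam"
proof -
  define D where "D \<mu> = lam\<^sup>2 - Fpm \<mu> * Fmp \<mu>" for \<mu>
  have D0: "D \<mu> \<noteq> 0" for \<mu>
    using det[of \<mu>] \<open>0 < \<delta>\<close> by (auto simp: D_def)
  have [measurable]: "D \<in> borel_measurable Mpos" unfolding D_def by measurable
  define K where "K = (cmod lam + 1) / \<delta>"
  have bound: "cmod (f / D \<mu>) \<le> K" if "cmod f \<le> cmod lam + 1" for f \<mu>
    using that det[of \<mu>] \<open>0 < \<delta>\<close> by (simp add: K_def norm_divide D_def frac_le)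
  have one_le: "1 \<le> cmod lam + 1" by simp
  have coeff_bounds: "cmod (- lam / D \<mu>) \<le> K" "cmod (- Fpm \<mu> / D \<mu>) \<le> K" "cmod (- Fmp \<mu> / D \<mu>) \<le> K"
    for \<mu>
    unfolding minus_divide_left norm_minus_cancel
    by (auto intro!: bound order.trans[OF norm_Fpm_le_1 one_le] order.trans[OF norm_Fmp_le_1 one_le])
  have coeff_meas: "(\<lambda>\<mu>. - lam / D \<mu>) \<in> borel_measurable Mpos"
    "(\<lambda>\<mu>. - Fpm \<mu> / D \<mu>) \<in> borel_measurable Mpos" "(\<lambda>\<mu>. - Fmp \<mu> / D \<mu>) \<in> borel_measurable Mpos"
    by (measurable, measurable, measurable)
  define S where "S = mmult (\<lambda>\<mu>. - lam / D \<mu>) (\<lambda>\<mu>. - Fpm \<mu> / D \<mu>) (\<lambda>\<mu>. - Fmp \<mu> / D \<mu>) (\<lambda>\<mu>. - lam / D \<mu>)"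
  have S_bounded: "S z \<in> Mspace" "mnorm (S z) \<le> 2 * K * mnorm z" if "z \<in> Mspace" for z
    unfolding S_def using mmult_bounded[OF coeff_meas(1,2,3,1) coeff_bounds(1,2,3,1) that] by auto
  show ?thesis unfolding MF_resolvent_def
  proof (intro exI[of _ S] conjI ballI allI impI exI[of _ "2 * K"])
    fix z1 z2 assume "meq z1 z2" then show "meq (S z1) (S z2)"
      unfolding meq_def S_def mmult_def by (auto elim: eventually_mono)
  next
    fix a z1 z2
    show "meq (S (madd (mscale a z1) z2)) (madd (mscale a (S z1)) (S z2))"
      unfolding meq_def S_def mmult_def madd_def mscale_def
      by (intro AE_I2) (simp add: algebra_simps add_divide_distrib)
  next
    fix y
    show "meq (S (madd (MF y) (mscale (- lam) y))) y"
      unfolding meq_def S_def mmult_def madd_def mscale_def MF_def prod.sel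
      by (intro AE_I2 conjI antidiagonal_inverse[OF D_def D0])
  next
    fix z
    show "meq (madd (MF (S z)) (mscale (- lam) (S z))) z"
      unfolding meq_def S_def mmult_def madd_def mscale_def MF_def prod.sel
      by (intro AE_I2 conjI antidiagonal_inverse[OF D_def D0])
  qed (use S_bounded in auto)
qed

lemma MF_resolvent_outside_segment:
  assumes "lam \<notin> closed_segment (- spectrum_end) spectrum_end"
  shows "MF_resolvent lam"
proof -
  have "lam\<^sup>2 \<notin> closed_segment 0 (spectrum_end\<^sup>2)"
    using assms in_closed_segment_if_square_in_closed_segment by blast
  then obtain \<delta> where "0 < \<delta>" "\<forall>w \<in> closed_segment 0 (spectrum_end\<^sup>2). \<delta> \<le> dist (lam\<^sup>2) w"
    using separate_point_closed[OF closed_segment] by blast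
  then show ?thesis
    using Fpm_mult_Fmp_in_closed_segment
    by (intro MF_resolvent_if_det_bounded_below[of \<delta>]) (auto simp: dist_norm)
qed

abbreviation MF_shift :: "complex \<Rightarrow> mvec \<Rightarrow> mvec" where
  "MF_shift lam y \<equiv> madd (MF y) (mscale (- lam) y)"

lemma not_MF_resolvent_if_approx_eigenvectors:
  assumes "\<And>\<epsilon>. 0 < \<epsilon> \<Longrightarrow> \<exists>y\<in>Mspace. 0 < mnorm y \<and> MF_shift lam y \<in> Mspace
      \<and> mnorm (MF_shift lam y) \<le> \<epsilon> * mnorm y"
  shows "\<not> MF_resolvent lam"
proof
  assume "MF_resolvent lam"
  then obtain S C where
    S_bounded: "\<And>z. z \<in> Mspace \<Longrightarrow> S z \<in> Mspace \<and> mnorm (S z) \<le> C * mnorm z" and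
    S_inverse: "\<And>y. y \<in> Mspace \<Longrightarrow> meq (S (MF_shift lam y)) y"
    unfolding MF_resolvent_def by blast
  define \<epsilon> where "\<epsilon> = 1 / (2 * (\<bar>C\<bar> + 1))"
  have "0 < \<epsilon>" by (simp add: \<epsilon>_def add_pos_nonneg)
  then obtain y where y: "y \<in> Mspace" "0 < mnorm y"
    and z: "MF_shift lam y \<in> Mspace" and small: "mnorm (MF_shift lam y) \<le> \<epsilon> * mnorm y"
    using assms by blast
  have "mnorm y = mnorm (S (MF_shift lam y))"
    using mnorm_meq[OF S_inverse[OF y(1)]] S_bounded[OF z] y(1) by simp
  also have "\<dots> \<le> C * mnorm (MF_shift lam y)"
    using S_bounded[OF z] by blast
  also have "\<dots> \<le> \<bar>C\<bar> * mnorm (MF_shift lam y)"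
    by (intro mult_right_mono) (auto simp: mnorm_def)
  also have "\<dots> \<le> \<bar>C\<bar> * (\<epsilon> * mnorm y)"
    using small by (intro mult_left_mono) auto
  also have "\<dots> = \<bar>C\<bar> / (2 * (\<bar>C\<bar> + 1)) * mnorm y"
    by (simp add: \<epsilon>_def)
  also have "\<dots> < mnorm y"
    using y(2) by (simp add: field_simps add_nonneg_pos)
  finally show False by simp
qed

lemma integral_indicator_Mpos:
  assumes "0 < a" "a \<le> b"
  shows "integrable Mpos (indicator {a..b} :: real \<Rightarrow> real)"
    "(\<integral>x. indicator {a..b} x \<partial>Mpos) = b - a"
proof -
  have restrict: "(\<lambda>x. indicator {0<..} x * (indicator {a..b} x :: real)) = indicator {a..b}"
    using assms by (auto simp: indicator_def fun_eq_iff)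
  have "integrable lborel (indicator {a..b} :: real \<Rightarrow> real)"
    using borel_integrable_compact[of "{a..b}" "\<lambda>_. 1::real"] by simp
  then show "integrable Mpos (indicator {a..b} :: real \<Rightarrow> real)"
    unfolding Mpos_def by (subst integrable_restrict_space) (auto simp: restrict)
  show "(\<integral>x. indicator {a..b} x \<partial>Mpos) = b - a"
    unfolding Mpos_def using assms by (subst integral_restrict_space) (auto simp: restrict)
qed

lemma mnorm_pos_if_snd_bounded_below:
  assumes "y \<in> Mspace" "0 < a" "a < b" "0 < c"
    and "\<And>\<mu>. \<mu> \<in> {a..b} \<Longrightarrow> c \<le> (cmod (snd y \<mu>))\<^sup>2"
  shows "0 < mnorm y"
proof -
  note I = integral_indicator_Mpos[of a b]
  have "0 < c * (b - a)" using assms by simp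
  also have "c * (b - a) = (\<integral>x. c * indicator {a..b} x \<partial>Mpos)"
    using I assms by simp
  also have "\<dots> \<le> (\<integral>x. (cmod (snd y x))\<^sup>2 \<partial>Mpos)"
    using assms I by (intro integral_mono integrable_mult_right)
      (auto simp: Mspace_def L2pos_def split: split_indicator)
  finally show ?thesis
    unfolding mnorm_def by (intro real_sqrt_gt_zero add_nonneg_pos) auto
qed

lemma isCont_interval_right:
  fixes g :: "real \<Rightarrow> real"
  assumes "isCont g x" "0 < \<epsilon>"
  shows "\<exists>a b. x < a \<and> a < b \<and> (\<forall>\<mu>\<in>{a..b}. \<bar>g \<mu> - g x\<bar> < \<epsilon>)"
proof -
  obtain s where "0 < s" "\<And>\<mu>. \<bar>\<mu> - x\<bar> < s \<Longrightarrow> \<bar>g \<mu> - g x\<bar> < \<epsilon>"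
    using assms unfolding isCont_def LIM_def dist_real_def
    by (metis abs_zero diff_self)
  then show ?thesis
    by (intro exI[of _ "x + s / 4"] exI[of _ "x + s / 2"]) auto
qed

definition sqrt_sech :: "real \<Rightarrow> real" where
  "sqrt_sech \<mu> = 1 / sqrt (cosh (pi * \<mu>))"

lemma isCont_sqrt_sech: "isCont sqrt_sech x"
  unfolding sqrt_sech_def using cosh_real_pos by (intro continuous_intros) auto

lemma sqrt_sech_sq: "(sqrt_sech \<mu>)\<^sup>2 = 1 / cosh (pi * \<mu>)"
  by (simp add: sqrt_sech_def power_divide)

lemma sqrt_sech_arcosh:
  assumes "0 < t" "t \<le> 1"
  shows "sqrt_sech (arcosh (1 / t\<^sup>2) / pi) = t"
proof -
  have "1 \<le> 1 / t\<^sup>2" using assms by (simp add: field_simps power_le_one)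
  then show ?thesis
    using assms by (simp add: sqrt_sech_def real_sqrt_divide)
qed

lemma sqrt_sech_approx:
  assumes "0 \<le> t" "t \<le> 1" "0 < \<epsilon>"
  shows "\<exists>a b. 0 < a \<and> a < b \<and> (\<forall>\<mu>\<in>{a..b}. \<bar>sqrt_sech \<mu> - t\<bar> \<le> \<epsilon>)"
proof -
  \<comment> \<open>The value 0 is not attained, so approximate a positive t' first.\<close>
  define t' where "t' = (if 0 < t then t else min (\<epsilon> / 2) 1)"
  have t': "0 < t'" "t' \<le> 1" "\<bar>t' - t\<bar> \<le> \<epsilon> / 2"
    using assms by (auto simp: t'_def)
  define x where "x = arcosh (1 / t'\<^sup>2) / pi"
  have "0 \<le> x" using t' by (simp add: x_def field_simps power_le_one)
  obtain a b where ab: "x < a" "a < b" "\<forall>\<mu>\<in>{a..b}. \<bar>sqrt_sech \<mu> - sqrt_sech x\<bar> < \<epsilon> / 2"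
    using isCont_interval_right[OF isCont_sqrt_sech, of "\<epsilon> / 2" x] assms(3) by auto
  have "sqrt_sech x = t'"
    unfolding x_def by (rule sqrt_sech_arcosh[OF t'(1,2)])
  have "\<bar>sqrt_sech \<mu> - t\<bar> \<le> \<epsilon>" if "\<mu> \<in> {a..b}" for \<mu>
  proof -
    have "\<bar>sqrt_sech \<mu> - t'\<bar> < \<epsilon> / 2"
      using ab(3) that \<open>sqrt_sech x = t'\<close> by auto
    then show ?thesis using t'(3) by arith
  qed
  then show ?thesis
    using \<open>0 \<le> x\<close> ab(1,2) by (intro exI[of _ a] exI[of _ b]) auto
qed

lemma norm_spectrum_end: "cmod spectrum_end = 1 / sqrt 2"
  by (simp add: spectrum_end_def norm_divide)

definition eigen_branch :: "real \<Rightarrow> real \<Rightarrow> complex" where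
  "eigen_branch \<sigma> \<mu> = of_real (\<sigma> * sqrt_sech \<mu>) * spectrum_end"

lemma eigen_branch_sq:
  assumes "\<bar>\<sigma>\<bar> = 1"
  shows "(eigen_branch \<sigma> \<mu>)\<^sup>2 = Fpm \<mu> * Fmp \<mu>"
proof -
  have "(eigen_branch \<sigma> \<mu>)\<^sup>2 = of_real (\<bar>\<sigma>\<bar>\<^sup>2 * (sqrt_sech \<mu>)\<^sup>2) * spectrum_end\<^sup>2"
    by (simp add: eigen_branch_def power_mult_distrib)
  also have "\<dots> = \<i> / of_real (2 * cosh (pi * \<mu>))"
    using assms by (simp add: sqrt_sech_sq spectrum_end_sq)
  finally show ?thesis by (simp add: Fpm_mult_Fmp)
qed

lemma norm_eigen_branch_sq:
  assumes "\<bar>\<sigma>\<bar> = 1"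
  shows "(cmod (eigen_branch \<sigma> \<mu>))\<^sup>2 = 1 / (2 * cosh (pi * \<mu>))"
  using assms
  by (simp add: eigen_branch_def norm_mult power_mult_distrib norm_spectrum_end sqrt_sech_sq power_divide)

lemma borel_measurable_eigen_branch [measurable]: "eigen_branch \<sigma> \<in> borel_measurable Mpos"
  unfolding eigen_branch_def using isCont_sqrt_sech
  by (intro borel_measurable_Mpos_continuous continuous_at_imp_continuous_on ballI continuous_intros) auto

lemma approx_eigenvector_on_interval:
  assumes "0 < a" "a < b" "\<bar>\<sigma>\<bar> = 1"
    and close: "\<And>\<mu>. \<mu> \<in> {a..b} \<Longrightarrow> cmod (eigen_branch \<sigma> \<mu> - lam) \<le> \<epsilon>"
  shows "\<exists>y\<in>Mspace. 0 < mnorm y \<and> MF_shift lam y \<in> Mspace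
      \<and> mnorm (MF_shift lam y) \<le> 2 * \<epsilon> * mnorm y"
proof -
  define I where "I = {a..b}"
  \<comment> \<open>(Fpm \<mu>, eigen_branch \<sigma> \<mu>) is an eigenvector of F(\<mu>) for the eigenvalue eigen_branch \<sigma> \<mu>.\<close>
  define y :: mvec where
    "y = ((\<lambda>\<mu>. if \<mu> \<in> I then Fpm \<mu> else 0), (\<lambda>\<mu>. if \<mu> \<in> I then eigen_branch \<sigma> \<mu> else 0))"
  define w where "w \<mu> = (if \<mu> \<in> I then eigen_branch \<sigma> \<mu> - lam else 0)" for \<mu>
  have y_meas [measurable]: "fst y \<in> borel_measurable Mpos" "snd y \<in> borel_measurable Mpos"
    unfolding y_def I_def by simp_all measurable
  have [measurable]: "w \<in> borel_measurable Mpos"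
    unfolding w_def I_def by measurable
  have "(cmod (fst y \<mu>))\<^sup>2 \<le> indicator I \<mu>" "(cmod (snd y \<mu>))\<^sup>2 \<le> indicator I \<mu>" for \<mu>
    using norm_Fpm_le_1[of \<mu>] norm_eigen_branch_sq[OF assms(3), of \<mu>] cosh_real_ge_1[of "pi * \<mu>"]
    by (auto simp: y_def power_le_one)
  then have y: "y \<in> Mspace"
    using L2pos_bound(1)[OF integral_indicator_Mpos(1)[of a b]] assms(1,2) y_meas
    by (auto simp: Mspace_def I_def)
  have "MF_shift lam y = mmult w (\<lambda>_. 0) (\<lambda>_. 0) w y"
    using eigen_branch_sq[OF assms(3)]
    by (auto simp: madd_def MF_def mscale_def mmult_def y_def w_def fun_eq_iff algebra_simps power2_eq_square)
  moreover note mmult_bounded[of w "\<lambda>_. 0" "\<lambda>_. 0" w \<epsilon>, OF _ _ _ _ _ _ _ _ y]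
  moreover have "0 \<le> \<epsilon>"
    using order_trans[OF norm_ge_zero close[of a]] assms(1,2) by simp
  moreover have "cmod (w \<mu>) \<le> \<epsilon>" for \<mu>
    using close \<open>0 \<le> \<epsilon>\<close> by (simp add: w_def I_def)
  moreover have "0 < mnorm y"
  proof (rule mnorm_pos_if_snd_bounded_below[OF y assms(1,2)])
    show "0 < 1 / (2 * cosh (pi * b))" by simp
    show "1 / (2 * cosh (pi * b)) \<le> (cmod (snd y \<mu>))\<^sup>2" if "\<mu> \<in> {a..b}" for \<mu>
      using that assms(1)
      by (simp add: y_def I_def norm_eigen_branch_sq[OF assms(3)] frac_le cosh_real_nonneg_le_iff)
  qed
  ultimately show ?thesis
    using y by auto
qed

lemma approx_eigenvector_on_segment:
  assumes "lam \<in> closed_segment (- spectrum_end) spectrum_end" "0 < \<epsilon>"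
  shows "\<exists>y\<in>Mspace. 0 < mnorm y \<and> MF_shift lam y \<in> Mspace
      \<and> mnorm (MF_shift lam y) \<le> \<epsilon> * mnorm y"
proof -
  obtain r where r: "\<bar>r\<bar> \<le> 1" "lam = of_real r * spectrum_end"
    using assms(1) by (auto simp: closed_segment_neg_iff scaleR_conv_of_real)
  define \<sigma> :: real where "\<sigma> = (if 0 \<le> r then 1 else -1)"
  obtain a b where ab: "0 < a" "a < b" "\<And>\<mu>. \<mu> \<in> {a..b} \<Longrightarrow> \<bar>sqrt_sech \<mu> - \<bar>r\<bar>\<bar> \<le> \<epsilon> / 2"
    using sqrt_sech_approx[of "\<bar>r\<bar>" "\<epsilon> / 2"] r(1) assms(2) by auto
  have \<sigma>: "\<bar>\<sigma>\<bar> = 1" by (simp add: \<sigma>_def)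
  have close: "cmod (eigen_branch \<sigma> \<mu> - lam) \<le> \<epsilon> / 2" if "\<mu> \<in> {a..b}" for \<mu>
  proof -
    have "eigen_branch \<sigma> \<mu> - lam = of_real (\<sigma> * sqrt_sech \<mu> - r) * spectrum_end"
      unfolding eigen_branch_def r(2) by (simp add: algebra_simps)
    moreover have "\<bar>\<sigma> * sqrt_sech \<mu> - r\<bar> = \<bar>sqrt_sech \<mu> - \<bar>r\<bar>\<bar>"
      unfolding \<sigma>_def by (cases "0 \<le> r") auto
    ultimately have "cmod (eigen_branch \<sigma> \<mu> - lam) = \<bar>sqrt_sech \<mu> - \<bar>r\<bar>\<bar> / sqrt 2"
      by (simp only: norm_mult norm_of_real norm_spectrum_end) simp
    also have "\<dots> \<le> \<bar>sqrt_sech \<mu> - \<bar>r\<bar>\<bar>"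
      by (simp add: divide_le_eq mult_le_cancel_left1)
    also have "\<dots> \<le> \<epsilon> / 2"
      using ab(3) that by simp
    finally show ?thesis .
  qed
  have "\<exists>y\<in>Mspace. 0 < mnorm y \<and> MF_shift lam y \<in> Mspace
      \<and> mnorm (MF_shift lam y) \<le> 2 * (\<epsilon> / 2) * mnorm y"
    by (rule approx_eigenvector_on_interval[OF ab(1,2) \<sigma> close])
  then show ?thesis by simp
qed

theorem theorem4p3:
  shows "MF_spectrum = closed_segment (- (cis (pi / 4) / complex_of_real (sqrt 2))) (cis (pi / 4) / complex_of_real (sqrt 2))"
proof -
  have "\<not> MF_resolvent lam \<longleftrightarrow> lam \<in> closed_segment (- spectrum_end) spectrum_end" for lam
    using MF_resolvent_outside_segment[of lam]
      not_MF_resolvent_if_approx_eigenvectors[OF approx_eigenvector_on_segment]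
    by blast
  then show ?thesis
    unfolding MF_spectrum_def spectrum_end_def by blast
qed

end
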